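(* We have $[w]_{A_\infty}'\leq c_d[w]_{A_\infty}$, where $c_d$ is a constant such that the logarithmic maximal function $M_0 f:=\sup_{Q}\exp\big(\frac{1}{|Q|}\int_Q\log|f|\big)\chi_Q$ satisfies $\|M_0f\|_{L^p}\leq c_{d}^{1/p}\|f\|_{L^p}$ for all $p\in(0,\infty)$.
   Context: Weights on $\mathbb{R}^d$, suprema over all cubes $Q$. $[w]_{A_\infty}:=\sup_Q\big(\frac{1}{|Q|}\int_Q w\big)\exp\big(\frac{1}{|Q|}\int_Q \log w^{-1}\big)$; $[w]_{A_\infty}':=\sup_Q\frac{1}{w(Q)}\int_Q M(w\chi_Q)$, $M$ the Hardy--Littlewood maximal operator. Such a dimensional $c_d$ exists (e.g. $c_d=(2C_d)^2$, $C_d$ from the $L^2$ bound of $M$; $c_d=e$ in the dyadic case). *)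

theory Defs
  imports "HOL-Analysis.Analysis"
begin

definition cube :: "'a::euclidean_space \<Rightarrow> real \<Rightarrow> 'a set" where
  "cube x r = cbox x (x + r *\<^sub>R One)"

definition cubes :: "'a::euclidean_space set set" where
  "cubes = {cube x r | x r. r > 0}"

definition epowr :: "ennreal \<Rightarrow> real \<Rightarrow> ennreal" where
  "epowr a p = (if a = \<infinity> then \<infinity> else ennreal (enn2real a powr p))"

definition Lp_norm :: "('a::euclidean_space \<Rightarrow> ennreal) \<Rightarrow> real \<Rightarrow> ennreal" where
  "Lp_norm g p = epowr (\<integral>\<^sup>+ x. epowr (g x) p \<partial>lborel) (1 / p)"

definition avg :: "('a::euclidean_space \<Rightarrow> ennreal) \<Rightarrow> 'a set \<Rightarrow> ennreal" where
  "avg g Q = (\<integral>\<^sup>+ x\<in>Q. g x \<partial>lborel) / emeasure lborel Q"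

text \<open>exp of the average of log g over Q, for g with values in [0,\<infinity>] (log 0 = -\<infinity>, log \<infinity> = \<infinity>).
  The integral of log g is the integral of its positive part minus that of its negative part.\<close>
definition log_pos :: "ennreal \<Rightarrow> ennreal" where
  "log_pos a = (if a = \<infinity> then \<infinity> else if a = 0 then 0 else ennreal (max 0 (ln (enn2real a))))"

definition log_neg :: "ennreal \<Rightarrow> ennreal" where
  "log_neg a = (if a = 0 then \<infinity> else if a = \<infinity> then 0 else ennreal (max 0 (- ln (enn2real a))))"

definition exp_avg_log :: "('a::euclidean_space \<Rightarrow> ennreal) \<Rightarrow> 'a set \<Rightarrow> ennreal" where
  "exp_avg_log g Q =
     (let P = \<integral>\<^sup>+ x\<in>Q. log_pos (g x) \<partial>lborel;
          N = \<integral>\<^sup>+ x\<in>Q. log_neg (g x) \<partial>lborel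
      in if P = \<infinity> then \<infinity> else if N = \<infinity> then 0
         else ennreal (exp ((enn2real P - enn2real N) / measure lborel Q)))"

definition maximal :: "('a::euclidean_space \<Rightarrow> real) \<Rightarrow> 'a \<Rightarrow> ennreal" where
  "maximal f x = (SUP Q\<in>{Q\<in>cubes. x \<in> Q}. avg (\<lambda>y. ennreal \<bar>f y\<bar>) Q)"

definition log_maximal :: "('a::euclidean_space \<Rightarrow> real) \<Rightarrow> 'a \<Rightarrow> ennreal" where
  "log_maximal f x = (SUP Q\<in>{Q\<in>cubes. x \<in> Q}. exp_avg_log (\<lambda>y. ennreal \<bar>f y\<bar>) Q)"

definition weight :: "('a::euclidean_space \<Rightarrow> real) \<Rightarrow> bool" where
  "weight w \<longleftrightarrow> w \<in> borel_measurable lborel \<and> (\<forall>x. 0 \<le> w x) \<and>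
     (AE x in lborel. 0 < w x) \<and> (\<forall>K. compact K \<longrightarrow> (\<integral>\<^sup>+ x\<in>K. ennreal (w x) \<partial>lborel) < \<infinity>)"

definition A_infty :: "('a::euclidean_space \<Rightarrow> real) \<Rightarrow> ennreal" where
  "A_infty w = (SUP Q\<in>cubes. avg (\<lambda>x. ennreal (w x)) Q * exp_avg_log (\<lambda>x. inverse (ennreal (w x))) Q)"

definition A_infty' :: "('a::euclidean_space \<Rightarrow> real) \<Rightarrow> ennreal" where
  "A_infty' w = (SUP Q\<in>cubes. (\<integral>\<^sup>+ x\<in>Q. maximal (\<lambda>y. w y * indicator Q y) x \<partial>lborel)
                               / (\<integral>\<^sup>+ x\<in>Q. ennreal (w x) \<partial>lborel))"

end

theory Submission
  imports Defs
begin

text \<open>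
  For any cube \<open>R\<close>, the definition of \<open>[w]\<^sub>A\<^sub>\<infinity>\<close> together with
  \<open>exp(avg\<^sub>R log w) \<cdot> exp(avg\<^sub>R log w\<^sup>-\<^sup>1) = 1\<close> gives
  \<open>avg\<^sub>R w \<le> [w]\<^sub>A\<^sub>\<infinity> exp(avg\<^sub>R log w)\<close>.
  Fix a cube \<open>Q\<close> and \<open>x \<in> Q\<close>. Every cube \<open>R \<ni> x\<close> meets \<open>Q\<close> inside a cube
  \<open>R' \<subseteq> Q\<close> containing \<open>x\<close> with \<open>|R'| \<le> |R|\<close>, so
  \<open>avg\<^sub>R (w\<chi>\<^sub>Q) \<le> avg\<^sub>R\<^sub>' w \<le> [w]\<^sub>A\<^sub>\<infinity> M\<^sub>0(w\<chi>\<^sub>Q)(x)\<close>, i.e.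
  \<open>M(w\<chi>\<^sub>Q) \<le> [w]\<^sub>A\<^sub>\<infinity> M\<^sub>0(w\<chi>\<^sub>Q)\<close> on \<open>Q\<close>. Integrating over \<open>Q\<close> and using the
  \<open>L\<^sup>1\<close> bound for \<open>M\<^sub>0\<close> yields \<open>\<integral>\<^sub>Q M(w\<chi>\<^sub>Q) \<le> c [w]\<^sub>A\<^sub>\<infinity> w(Q)\<close>.
\<close>

text \<open>Unlike \<open>nn_integral_cmult\<close>, this needs no measurability of \<open>g\<close>.\<close>
lemma nn_integral_cmult_le:
  fixes c :: ennreal
  assumes "c < \<infinity>"
  shows "(\<integral>\<^sup>+ x. c * g x \<partial>M) \<le> c * integral\<^sup>N M g"
proof (cases "c = 0")
  case False
  then have c: "0 < c" by (simp add: zero_less_iff_neq_zero)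
  show ?thesis
    unfolding nn_integral_def[of M "\<lambda>x. c * g x"]
  proof (rule SUP_least, clarify)
    fix s assume s: "simple_function M s" "s \<le> (\<lambda>x. c * g x)"
    define s' where "s' = (\<lambda>x. s x / c)"
    have simple: "simple_function M s'" unfolding s'_def using simple_function_compose1[OF s(1)] .
    have le: "s' \<le> g"
    proof (rule le_funI)
      fix x have "s x \<le> c * g x" using s(2) by (auto dest: le_funD)
      then show "s' x \<le> g x" unfolding s'_def using c assms by (metis divide_le_posI_ennreal)
    qed
    have eq: "s = (\<lambda>x. c * s' x)" unfolding s'_def using c assms
      by (auto simp: ennreal_times_divide mult.commute[of c] mult_divide_eq_ennreal)
    have "integral\<^sup>S M s = c * integral\<^sup>S M s'" by (subst eq) (simp add: simple)
    also have "\<dots> \<le> c * integral\<^sup>N M g"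
      using simple le by (intro mult_left_mono) (auto simp: nn_integral_def intro!: SUP_upper)
    finally show "integral\<^sup>S M s \<le> c * integral\<^sup>N M g" .
  qed
qed simp

lemma epowr_one [simp]: "epowr a 1 = a"
  by (cases "a = \<infinity>") (auto simp: epowr_def ennreal_enn2real less_top)

lemma Lp_norm_one: "Lp_norm g 1 = (\<integral>\<^sup>+ x. g x \<partial>lborel)"
  by (simp add: Lp_norm_def)

lemma mem_cube: "y \<in> cube x r \<longleftrightarrow> (\<forall>i\<in>Basis. x \<bullet> i \<le> y \<bullet> i \<and> y \<bullet> i \<le> x \<bullet> i + r)"
  by (simp add: cube_def mem_box inner_simps)

lemma emeasure_cube: "0 < r \<Longrightarrow> emeasure lborel (cube x r) = ennreal (r ^ DIM('a))"
  for x :: "'a::euclidean_space"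
  by (simp add: cube_def emeasure_lborel_cbox_eq inner_simps)

lemma sets_cube [measurable]: "cube x r \<in> sets lborel"
  by (simp add: cube_def)

lemma cube_in_cubes: "0 < r \<Longrightarrow> cube x r \<in> cubes"
  by (auto simp: cubes_def)

lemma cubesE:
  assumes "Q \<in> cubes"
  obtains x r where "Q = cube x r" "0 < r"
  using assms by (auto simp: cubes_def)

lemma cube_Int_subset_subcube:
  fixes a b :: "'a::euclidean_space"
  assumes "0 < s" "0 < t"
  obtains y where "cube a s \<inter> cube b t \<subseteq> cube y (min s t)" "cube y (min s t) \<subseteq> cube b t"
proof -
  define m where "m = min s t"
  \<comment> \<open>In each coordinate, push the lower corner of \<open>cube b t\<close> up towards that of \<open>cube a s\<close>,
    as far as a side of length \<open>m\<close> still fits into \<open>cube b t\<close>.\<close>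
  define y where "y = (\<Sum>i\<in>Basis. min (max (a\<bullet>i) (b\<bullet>i)) (b\<bullet>i + t - m) *\<^sub>R i)"
  have y: "y \<bullet> i = min (max (a\<bullet>i) (b\<bullet>i)) (b\<bullet>i + t - m)" if "i \<in> Basis" for i
    unfolding y_def using that by (simp add: inner_sum_left inner_Basis if_distrib cong: if_cong)
  have "cube a s \<inter> cube b t \<subseteq> cube y m"
  proof (clarsimp simp: mem_cube y)
    fix z i :: 'a
    assume "\<forall>i\<in>Basis. a \<bullet> i \<le> z \<bullet> i \<and> z \<bullet> i \<le> a \<bullet> i + s"
      "\<forall>i\<in>Basis. b \<bullet> i \<le> z \<bullet> i \<and> z \<bullet> i \<le> b \<bullet> i + t" and "i \<in> Basis"
    then have "a \<bullet> i \<le> z \<bullet> i" "z \<bullet> i \<le> a \<bullet> i + s" "b \<bullet> i \<le> z \<bullet> i" "z \<bullet> i \<le> b \<bullet> i + t"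
      by auto
    then show "min (max (a \<bullet> i) (b \<bullet> i)) (b \<bullet> i + t - m) \<le> z \<bullet> i \<and>
        z \<bullet> i \<le> min (max (a \<bullet> i) (b \<bullet> i)) (b \<bullet> i + t - m) + m"
      unfolding m_def by (simp add: min_def max_def)
  qed
  moreover have "cube y m \<subseteq> cube b t"
  proof (clarsimp simp: mem_cube y)
    fix z i :: 'a
    assume "\<forall>i\<in>Basis. min (max (a \<bullet> i) (b \<bullet> i)) (b \<bullet> i + t - m) \<le> z \<bullet> i \<and>
        z \<bullet> i \<le> min (max (a \<bullet> i) (b \<bullet> i)) (b \<bullet> i + t - m) + m" and "i \<in> Basis"
    then have "min (max (a \<bullet> i) (b \<bullet> i)) (b \<bullet> i + t - m) \<le> z \<bullet> i"
      "z \<bullet> i \<le> min (max (a \<bullet> i) (b \<bullet> i)) (b \<bullet> i + t - m) + m" by auto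
    then show "b \<bullet> i \<le> z \<bullet> i \<and> z \<bullet> i \<le> b \<bullet> i + t"
      unfolding m_def using assms by (simp add: min_def max_def split: if_splits)
  qed
  ultimately show ?thesis using that unfolding m_def by blast
qed

lemma avg_le_avg_smaller:
  assumes "(\<integral>\<^sup>+ x\<in>R. f x \<partial>lborel) \<le> (\<integral>\<^sup>+ x\<in>R'. g x \<partial>lborel)"
    and "emeasure lborel R' \<le> emeasure lborel R"
    and "0 < emeasure lborel R'" "emeasure lborel R' \<noteq> \<infinity>"
  shows "avg f R \<le> avg g R'"
proof -
  let ?I = "\<integral>\<^sup>+ x\<in>R'. g x \<partial>lborel"
  have "avg f R \<le> ?I / emeasure lborel R"
    unfolding avg_def using assms(1) by (rule divide_right_mono_ennreal)
  also have "\<dots> \<le> ?I / emeasure lborel R'"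
  proof (rule divide_le_posI_ennreal)
    show "0 < emeasure lborel R" using assms(2,3) by order
    have "?I = emeasure lborel R' * (?I / emeasure lborel R')"
      using assms(3,4)
      by (simp add: ennreal_times_divide mult.commute[of "emeasure lborel R'"] mult_divide_eq_ennreal)
    also have "\<dots> \<le> emeasure lborel R * (?I / emeasure lborel R')"
      using assms(2) by (rule mult_right_mono) simp
    finally show "?I \<le> emeasure lborel R * (?I / emeasure lborel R')" .
  qed
  finally show ?thesis unfolding avg_def .
qed

lemma log_pos_inverse: "0 \<le> a \<Longrightarrow> log_pos (inverse (ennreal a)) = log_neg (ennreal a)"
  by (cases "a = 0") (auto simp: log_pos_def log_neg_def inverse_ennreal ln_inverse)

lemma log_neg_inverse: "0 \<le> a \<Longrightarrow> log_neg (inverse (ennreal a)) = log_pos (ennreal a)"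
  by (cases "a = 0") (auto simp: log_pos_def log_neg_def inverse_ennreal ln_inverse)

lemma log_pos_le: "0 \<le> a \<Longrightarrow> log_pos (ennreal a) \<le> ennreal a"
proof (cases "a = 0")
  case False
  moreover assume "0 \<le> a"
  moreover from calculation have "ln a \<le> a - 1" by (intro ln_le_minus_one) auto
  ultimately show ?thesis by (auto simp: log_pos_def intro!: ennreal_leI)
qed (simp add: log_pos_def)

lemma exp_avg_log_cong:
  assumes "\<And>y. y \<in> R \<Longrightarrow> g y = h y"
  shows "exp_avg_log g R = exp_avg_log h R"
proof -
  have "\<And>F. (\<integral>\<^sup>+ y\<in>R. F (g y) \<partial>lborel) = (\<integral>\<^sup>+ y\<in>R. F (h y) \<partial>lborel)"
    by (intro nn_integral_cong) (auto split: split_indicator simp: assms)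
  then show ?thesis unfolding exp_avg_log_def by simp
qed

lemma exp_avg_log_one: "exp_avg_log (\<lambda>_. 1) R = 1"
  by (simp add: exp_avg_log_def log_pos_def log_neg_def)

lemma exp_avg_log_inverse_eq_top:
  assumes "\<And>x. 0 \<le> w x" and "(\<integral>\<^sup>+ x\<in>R. log_neg (ennreal (w x)) \<partial>lborel) = \<infinity>"
  shows "exp_avg_log (\<lambda>x. inverse (ennreal (w x))) R = \<infinity>"
  using assms by (simp add: exp_avg_log_def log_pos_inverse)

lemma exp_avg_log_inverse_mult:
  assumes "\<And>x. 0 \<le> w x"
    and "(\<integral>\<^sup>+ x\<in>R. log_pos (ennreal (w x)) \<partial>lborel) \<noteq> \<infinity>"
    and "(\<integral>\<^sup>+ x\<in>R. log_neg (ennreal (w x)) \<partial>lborel) \<noteq> \<infinity>"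
  shows "exp_avg_log (\<lambda>x. inverse (ennreal (w x))) R * exp_avg_log (\<lambda>x. ennreal (w x)) R = 1"
  using assms
  by (simp add: exp_avg_log_def Let_def log_pos_inverse log_neg_inverse ennreal_mult'[symmetric]
      exp_add[symmetric] diff_divide_distrib)

lemma weight_nonneg: "weight w \<Longrightarrow> 0 \<le> w x"
  by (simp add: weight_def)

lemma weight_nn_integral_cube_pos:
  assumes w: "weight w" and r: "0 < r"
  shows "0 < (\<integral>\<^sup>+ x\<in>cube y r. ennreal (w x) \<partial>lborel)"
proof (rule ccontr)
  assume "\<not> ?thesis"
  then have "(\<integral>\<^sup>+ x. ennreal (w x) * indicator (cube y r) x \<partial>lborel) = 0" by simp
  then have "AE x in lborel. ennreal (w x) * indicator (cube y r) x = 0"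
    using w by (subst (asm) nn_integral_0_iff_AE) (auto simp: weight_def)
  moreover have "AE x in lborel. 0 < w x" using w by (simp add: weight_def)
  ultimately have "AE x in lborel. x \<notin> cube y r"
    by eventually_elim (auto split: split_indicator)
  then have "emeasure lborel (cube y r) = 0"
    by (subst (asm) AE_iff_measurable[OF sets_cube]) auto
  then show False using emeasure_cube[OF r, of y] r by simp
qed

lemma weight_nn_integral_cube_finite:
  "weight w \<Longrightarrow> (\<integral>\<^sup>+ x\<in>cube y r. ennreal (w x) \<partial>lborel) < \<infinity>"
  unfolding weight_def cube_def by (auto intro: compact_cbox)

lemma avg_le_A_infty_mult_exp_avg_log:
  fixes w :: "'a::euclidean_space \<Rightarrow> real"
  assumes w: "weight w" and r: "0 < r" and A: "A_infty w < \<infinity>"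
  shows "avg (\<lambda>x. ennreal (w x)) (cube y r) \<le> A_infty w * exp_avg_log (\<lambda>x. ennreal (w x)) (cube y r)"
proof -
  let ?R = "cube y r"
  let ?avg = "avg (\<lambda>x. ennreal (w x)) ?R"
  let ?E = "exp_avg_log (\<lambda>x. ennreal (w x)) ?R"
  let ?E' = "exp_avg_log (\<lambda>x. inverse (ennreal (w x))) ?R"
  have w0: "\<And>x. 0 \<le> w x" using w by (rule weight_nonneg)
  have A_ge: "?avg * ?E' \<le> A_infty w"
    unfolding A_infty_def using cube_in_cubes[OF r] by (rule SUP_upper)
  have "(\<integral>\<^sup>+ x\<in>?R. log_pos (ennreal (w x)) \<partial>lborel) \<le> (\<integral>\<^sup>+ x\<in>?R. ennreal (w x) \<partial>lborel)"
    by (intro nn_integral_mono) (auto simp: w0 log_pos_le split: split_indicator)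
  with weight_nn_integral_cube_finite[OF w, of y r]
  have P_fin: "(\<integral>\<^sup>+ x\<in>?R. log_pos (ennreal (w x)) \<partial>lborel) \<noteq> \<infinity>"
    by (auto simp: top_unique)
  show ?thesis
  proof (cases "(\<integral>\<^sup>+ x\<in>?R. log_neg (ennreal (w x)) \<partial>lborel) = \<infinity>")
    case True
    have "0 < ?avg"
      using weight_nn_integral_cube_pos[OF w r, of y]
      by (simp add: avg_def emeasure_cube[OF r] ennreal_zero_less_divide)
    then have "?avg * ?E' = \<infinity>"
      using exp_avg_log_inverse_eq_top[OF w0 True] by (simp add: ennreal_mult_top)
    with A_ge A show ?thesis by (simp add: top_unique)
  next
    case False
    have "?avg = ?avg * ?E' * ?E"
      using exp_avg_log_inverse_mult[OF w0 P_fin False] by (simp add: mult.assoc)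
    also have "\<dots> \<le> A_infty w * ?E"
      using A_ge by (rule mult_right_mono) simp
    finally show ?thesis .
  qed
qed

lemma maximal_le_A_infty_mult_log_maximal:
  fixes w :: "'a::euclidean_space \<Rightarrow> real"
  assumes w: "weight w" and A: "A_infty w < \<infinity>" and Q: "Q \<in> cubes" and x: "x \<in> Q"
  shows "maximal (\<lambda>y. w y * indicator Q y) x \<le> A_infty w * log_maximal (\<lambda>y. w y * indicator Q y) x"
  unfolding maximal_def
proof (rule SUP_least, clarify)
  let ?f = "\<lambda>y. w y * indicator Q y"
  have w0: "\<And>x. 0 \<le> w x" using w by (rule weight_nonneg)
  obtain b t where Qbt: "Q = cube b t" "0 < t" using Q by (rule cubesE)
  fix R assume R: "R \<in> cubes" "x \<in> R"
  obtain a s where Ras: "R = cube a s" "0 < s" using R(1) by (rule cubesE)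
  obtain y where y: "R \<inter> Q \<subseteq> cube y (min s t)" "cube y (min s t) \<subseteq> Q"
    using cube_Int_subset_subcube[OF Ras(2) Qbt(2)] unfolding Ras(1) Qbt(1) by blast
  let ?R' = "cube y (min s t)"
  have m: "0 < min s t" using Ras Qbt by simp
  have "avg (\<lambda>z. ennreal \<bar>?f z\<bar>) R \<le> avg (\<lambda>z. ennreal (w z)) ?R'"
  proof (rule avg_le_avg_smaller)
    show "(\<integral>\<^sup>+ z\<in>R. ennreal \<bar>?f z\<bar> \<partial>lborel) \<le> (\<integral>\<^sup>+ z\<in>?R'. ennreal (w z) \<partial>lborel)"
      by (intro nn_integral_mono) (use y in \<open>auto simp: w0 split: split_indicator\<close>)
    show "emeasure lborel ?R' \<le> emeasure lborel R"
      unfolding Ras(1) emeasure_cube[OF m] emeasure_cube[OF Ras(2)]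
      using m by (intro ennreal_leI power_mono) auto
  qed (use m in \<open>auto simp: emeasure_cube\<close>)
  also have "\<dots> \<le> A_infty w * exp_avg_log (\<lambda>z. ennreal (w z)) ?R'"
    by (rule avg_le_A_infty_mult_exp_avg_log[OF w m A])
  also have "exp_avg_log (\<lambda>z. ennreal (w z)) ?R' = exp_avg_log (\<lambda>z. ennreal \<bar>?f z\<bar>) ?R'"
    by (rule exp_avg_log_cong) (use y w0 in \<open>auto split: split_indicator\<close>)
  also have "\<dots> \<le> log_maximal ?f x"
    unfolding log_maximal_def
    by (rule SUP_upper) (use y R x cube_in_cubes[OF m] in auto)
  finally show "avg (\<lambda>z. ennreal \<bar>?f z\<bar>) R \<le> A_infty w * log_maximal ?f x"
    by (simp add: mult_left_mono)
qed

lemma indicator_le_log_maximal_indicator: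
  assumes "Q \<in> cubes"
  shows "indicator Q x \<le> log_maximal (indicator Q :: 'a::euclidean_space \<Rightarrow> real) x"
proof (cases "x \<in> Q")
  case True
  have "exp_avg_log (\<lambda>y. ennreal \<bar>indicator Q y :: real\<bar>) Q = 1"
    by (subst exp_avg_log_cong[where h = "\<lambda>_. 1"]) (auto simp: exp_avg_log_one)
  moreover have "exp_avg_log (\<lambda>y. ennreal \<bar>indicator Q y :: real\<bar>) Q \<le> log_maximal (indicator Q) x"
    unfolding log_maximal_def using assms True by (intro SUP_upper) auto
  ultimately show ?thesis using True by simp
qed simp

lemma log_maximal_L1_bound_pos:
  assumes L1: "\<And>f :: 'a::euclidean_space \<Rightarrow> real. f \<in> borel_measurable lborel \<Longrightarrow>
      (\<integral>\<^sup>+ x. log_maximal f x \<partial>lborel) \<le> ennreal c * (\<integral>\<^sup>+ x. ennreal \<bar>f x\<bar> \<partial>lborel)"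
  shows "0 < c"
proof (rule ccontr)
  assume "\<not> 0 < c"
  then have c: "ennreal c = 0" by (simp add: ennreal_eq_0_iff)
  let ?Q = "cube (0::'a) 1"
  have "emeasure lborel ?Q = (\<integral>\<^sup>+ x. indicator ?Q x \<partial>lborel)"
    by (rule nn_integral_indicator[OF sets_cube, symmetric])
  also have "\<dots> \<le> (\<integral>\<^sup>+ x. log_maximal (indicator ?Q) x \<partial>lborel)"
    by (intro nn_integral_mono indicator_le_log_maximal_indicator cube_in_cubes) simp
  also have "\<dots> \<le> 0" using L1[of "indicator ?Q"] c by simp
  finally show False using emeasure_cube[of 1 "0::'a"] by simp
qed

lemma A_infty'_le_of_log_maximal_L1_bound:
  fixes w :: "'a::euclidean_space \<Rightarrow> real"
  assumes L1: "\<And>f :: 'a \<Rightarrow> real. f \<in> borel_measurable lborel \<Longrightarrow>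
      (\<integral>\<^sup>+ x. log_maximal f x \<partial>lborel) \<le> ennreal c * (\<integral>\<^sup>+ x. ennreal \<bar>f x\<bar> \<partial>lborel)"
    and w: "weight w"
  shows "A_infty' w \<le> ennreal c * A_infty w"
proof (cases "A_infty w = \<infinity>")
  case True
  \<comment> \<open>Here \<open>c > 0\<close> matters: in \<open>ennreal\<close>, \<open>0 * \<infinity> = 0\<close>.\<close>
  then show ?thesis using log_maximal_L1_bound_pos[OF L1] by (simp add: ennreal_mult_top)
next
  case False
  then have A: "A_infty w < \<infinity>" by (simp add: less_top)
  show ?thesis
    unfolding A_infty'_def
  proof (rule SUP_least)
    fix Q :: "'a set" assume Q: "Q \<in> cubes"
    then obtain b t where Qbt: "Q = cube b t" "0 < t" by (rule cubesE)
    let ?f = "\<lambda>y. w y * indicator Q y"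
    let ?W = "\<integral>\<^sup>+ x\<in>Q. ennreal (w x) \<partial>lborel"
    have "(\<integral>\<^sup>+ x\<in>Q. maximal ?f x \<partial>lborel) \<le> (\<integral>\<^sup>+ x. A_infty w * log_maximal ?f x \<partial>lborel)"
      by (intro nn_integral_mono)
        (auto simp: maximal_le_A_infty_mult_log_maximal[OF w A Q] split: split_indicator)
    also have "\<dots> \<le> A_infty w * (\<integral>\<^sup>+ x. log_maximal ?f x \<partial>lborel)"
      using A by (rule nn_integral_cmult_le)
    also have "\<dots> \<le> A_infty w * (ennreal c * (\<integral>\<^sup>+ x. ennreal \<bar>?f x\<bar> \<partial>lborel))"
      using w unfolding Qbt(1) by (intro mult_left_mono L1) (auto simp: weight_def)
    also have "(\<integral>\<^sup>+ x. ennreal \<bar>?f x\<bar> \<partial>lborel) = ?W"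
      using weight_nonneg[OF w] by (intro nn_integral_cong) (auto split: split_indicator)
    finally show "(\<integral>\<^sup>+ x\<in>Q. maximal ?f x \<partial>lborel) / ?W \<le> ennreal c * A_infty w"
      using weight_nn_integral_cube_pos[OF w Qbt(2)] unfolding Qbt(1)
      by (intro divide_le_posI_ennreal) (simp_all add: ac_simps)
  qed
qed

theorem proposition2p2:
  fixes c :: real and w :: "'a::euclidean_space \<Rightarrow> real"
  assumes M0_bound: "\<And>(f :: 'a \<Rightarrow> real) p. f \<in> borel_measurable lborel \<Longrightarrow> 0 < p \<Longrightarrow>
      Lp_norm (log_maximal f) p \<le> epowr (ennreal c) (1 / p) * Lp_norm (\<lambda>x. ennreal \<bar>f x\<bar>) p"
    and "weight w"
  shows "A_infty' w \<le> ennreal c * A_infty w"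
proof (rule A_infty'_le_of_log_maximal_L1_bound[OF _ \<open>weight w\<close>])
  fix f :: "'a \<Rightarrow> real" assume "f \<in> borel_measurable lborel"
  from M0_bound[OF this, of 1]
  show "(\<integral>\<^sup>+ x. log_maximal f x \<partial>lborel) \<le> ennreal c * (\<integral>\<^sup>+ x. ennreal \<bar>f x\<bar> \<partial>lborel)"
    by (simp add: Lp_norm_one)
qed

end
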